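(* Let $t$ and $\tau$ be normal terms, $y$ a $\lambda$-variable with $y\notin Fv(t)$ and $(t\;y)\triangleright^*\tau$, let $A,B$ be types, and suppose $\Gamma,y:A\vdash\tau:B;\Delta$. Then $\Gamma\vdash t:A\to B;\Delta$.
   Context: $\lambda\mu$-terms: $t::= x\mid \lambda x.t\mid (t\;t)\mid \mu a.t\mid (a\;t)$ over disjoint infinite sets of $\lambda$-variables and $\mu$-variables; $Fv(t)$ denotes free variables; types built from propositional variables and $\perp$ with $\to$. Reduction $(\lambda x.u\;v)\triangleright u[x:=v]$, $(\mu a.u\;v)\triangleright\mu a.u[a:=^*v]$ ($u[a:=^*v]$ replaces each subterm $(a\;w)$ of $u$ by $(a\;(w\;v))$), $\triangleright^*$ its reflexive transitive compatible closure; normal = no redex. Typing rules for $\Gamma\vdash t:A;\Delta$ ($\Gamma$ declarations of $\lambda$-variables, $\Delta$ of $\mu$-variables): (ax) $\Gamma\vdash x:A;\Delta$ if $x:A\in\Gamma$; ($\to_i$) from $\Gamma,x:A\vdash t:B;\Delta$ infer $\Gamma\vdash\lambda x.t:A\to B;\Delta$; ($\to_e$) from $\Gamma\vdash u:A\to B;\Delta$, $\Gamma\vdash v:A;\Delta$ infer $\Gamma\vdash(u\;v):B;\Delta$; ($\mu$) from $\Gamma\vdash t:\perp;\Delta,a:A$ infer $\Gamma\vdash\mu a.t:A;\Delta$; ($\perp$) from $\Gamma\vdash t:A;\Delta,a:A$ infer $\Gamma\vdash(a\;t):\perp;\Delta,a:A$. *)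

theory Defs
  imports Main
begin

text \<open>Lambda-mu calculus with de Bruijn indices. Two independent index spaces:
  lambda-variables (Var) are bound by Lam, mu-variables (MVar a t = (a t)) are bound by Mu.\<close>

datatype trm =
    Var nat
  | Lam trm
  | App trm trm
  | Mu trm
  | MVar nat trm

datatype ty = Atom nat | Bot | Arr ty ty

fun liftL :: "nat \<Rightarrow> trm \<Rightarrow> trm" where
  "liftL k (Var i) = (if i < k then Var i else Var (Suc i))"
| "liftL k (Lam t) = Lam (liftL (Suc k) t)"
| "liftL k (App t u) = App (liftL k t) (liftL k u)"
| "liftL k (Mu t) = Mu (liftL k t)"
| "liftL k (MVar a t) = MVar a (liftL k t)"

fun liftM :: "nat \<Rightarrow> trm \<Rightarrow> trm" where
  "liftM k (Var i) = Var i"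
| "liftM k (Lam t) = Lam (liftM k t)"
| "liftM k (App t u) = App (liftM k t) (liftM k u)"
| "liftM k (Mu t) = Mu (liftM (Suc k) t)"
| "liftM k (MVar a t) = MVar (if a < k then a else Suc a) (liftM k t)"

text \<open>Capture-avoiding substitution t[x:=s] of s for the lambda-variable with index k
  (the binder of k is removed, so higher indices are decremented).\<close>
fun substL :: "trm \<Rightarrow> nat \<Rightarrow> trm \<Rightarrow> trm" where
  "substL (Var i) k s = (if i < k then Var i else if i = k then s else Var (i - 1))"
| "substL (Lam t) k s = Lam (substL t (Suc k) (liftL 0 s))"
| "substL (App t u) k s = App (substL t k s) (substL u k s)"
| "substL (Mu t) k s = Mu (substL t k (liftM 0 s))"
| "substL (MVar a t) k s = MVar a (substL t k s)"

text \<open>Structural substitution u[a:=* v]: every subterm (a w) with a the mu-variable of index k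
  becomes (a (w v)).\<close>
fun substM :: "trm \<Rightarrow> nat \<Rightarrow> trm \<Rightarrow> trm" where
  "substM (Var i) k v = Var i"
| "substM (Lam t) k v = Lam (substM t k (liftL 0 v))"
| "substM (App t u) k v = App (substM t k v) (substM u k v)"
| "substM (Mu t) k v = Mu (substM t (Suc k) (liftM 0 v))"
| "substM (MVar a t) k v =
     (if a = k then MVar a (App (substM t k v) v) else MVar a (substM t k v))"

inductive red :: "trm \<Rightarrow> trm \<Rightarrow> bool" where
  beta: "red (App (Lam u) v) (substL u 0 v)"
| mu: "red (App (Mu u) v) (Mu (substM u 0 (liftM 0 v)))"
| appL: "red t t' \<Longrightarrow> red (App t u) (App t' u)"
| appR: "red u u' \<Longrightarrow> red (App t u) (App t u')"
| lam: "red t t' \<Longrightarrow> red (Lam t) (Lam t')"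
| muc: "red t t' \<Longrightarrow> red (Mu t) (Mu t')"
| mvar: "red t t' \<Longrightarrow> red (MVar a t) (MVar a t')"

abbreviation red_star :: "trm \<Rightarrow> trm \<Rightarrow> bool" where
  "red_star \<equiv> red\<^sup>*\<^sup>*"

fun is_redex :: "trm \<Rightarrow> bool" where
  "is_redex (App (Lam u) v) = True"
| "is_redex (App (Mu u) v) = True"
| "is_redex _ = False"

fun normal :: "trm \<Rightarrow> bool" where
  "normal (Var i) = True"
| "normal (Lam t) = normal t"
| "normal (App t u) = (\<not> is_redex (App t u) \<and> normal t \<and> normal u)"
| "normal (Mu t) = normal t"
| "normal (MVar a t) = normal t"

text \<open>Contexts assign types to indices; extension by a new innermost variable.\<close>
definition ext :: "ty \<Rightarrow> (nat \<Rightarrow> ty) \<Rightarrow> nat \<Rightarrow> ty" where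
  "ext A \<Gamma> = (\<lambda>i. if i = 0 then A else \<Gamma> (i - 1))"

inductive typing :: "(nat \<Rightarrow> ty) \<Rightarrow> trm \<Rightarrow> ty \<Rightarrow> (nat \<Rightarrow> ty) \<Rightarrow> bool" where
  ax: "typing \<Gamma> (Var x) (\<Gamma> x) \<Delta>"
| arr_i: "typing (ext A \<Gamma>) t B \<Delta> \<Longrightarrow> typing \<Gamma> (Lam t) (Arr A B) \<Delta>"
| arr_e: "typing \<Gamma> u (Arr A B) \<Delta> \<Longrightarrow> typing \<Gamma> v A \<Delta> \<Longrightarrow> typing \<Gamma> (App u v) B \<Delta>"
| mu: "typing \<Gamma> t Bot (ext A \<Delta>) \<Longrightarrow> typing \<Gamma> (Mu t) A \<Delta>"
| bot: "typing \<Gamma> t (\<Delta> a) \<Delta> \<Longrightarrow> typing \<Gamma> (MVar a t) Bot \<Delta>"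

end

theory Submission
  imports Defs
begin

text \<open>Since \<open>t\<close> is normal, every redex of \<open>(t y)\<close> has a variable as argument, and this
  property is preserved by reduction. Contracting a redex whose argument is a variable only
  renames a \<open>\<lambda>\<close>-variable or turns each \<open>(a w)\<close> into \<open>(a (w z))\<close>, so a typing of the
  contractum can be pulled back to the redex (subject expansion, with \<open>a\<close> retyped as
  \<open>\<Gamma>(z) \<rightarrow> \<Delta>(a)\<close>). Hence \<open>\<Gamma>, y:A \<turnstile> (t y) : B\<close>, and as \<open>y\<close> is not free in \<open>t\<close> this gives
  \<open>\<Gamma> \<turnstile> t : A \<rightarrow> B\<close>.\<close>

inductive_cases typing_VarE: "typing G (Var i) T D"
inductive_cases typing_LamE: "typing G (Lam t) T D"
inductive_cases typing_AppE: "typing G (App t u) T D"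
inductive_cases typing_MuE: "typing G (Mu t) T D"
inductive_cases typing_MVarE: "typing G (MVar a t) T D"
inductive_cases red_VarE: "red (Var k) u"

fun neutral :: "trm \<Rightarrow> bool" where
  "neutral (Var i) = True"
| "neutral (MVar a t) = True"
| "neutral (App f u) = neutral f"
| "neutral _ = False"

text \<open>Every application either has a neutral head (so it is not and never becomes a redex
  at the root) or has a variable as argument.\<close>
fun var_redex_args :: "trm \<Rightarrow> bool" where
  "var_redex_args (Var i) = True"
| "var_redex_args (Lam t) = var_redex_args t"
| "var_redex_args (Mu t) = var_redex_args t"
| "var_redex_args (MVar a t) = var_redex_args t"
| "var_redex_args (App f u) =
     (var_redex_args f \<and> var_redex_args u \<and> (neutral f \<or> (\<exists>k. u = Var k)))"

lemma normal_neutral: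
  "normal t \<Longrightarrow> \<nexists>u. t = Lam u \<Longrightarrow> \<nexists>u. t = Mu u \<Longrightarrow> neutral t"
proof (induction t)
  case (App t1 t2)
  then show ?case by (cases t1) auto
qed auto

lemma normal_var_redex_args: "normal t \<Longrightarrow> var_redex_args t"
proof (induction t)
  case (App t1 t2)
  then show ?case using normal_neutral[of t1] by (cases t1) auto
qed auto

lemma neutral_liftL: "neutral t \<Longrightarrow> neutral (liftL k t)"
  by (induction t arbitrary: k) auto

lemma var_redex_args_liftL: "var_redex_args t \<Longrightarrow> var_redex_args (liftL k t)"
  by (induction t arbitrary: k) (auto simp: neutral_liftL split: if_splits)

lemma neutral_substL_Var: "neutral t \<Longrightarrow> neutral (substL t k (Var j))"
  by (induction t arbitrary: k j) auto

lemma var_redex_args_substL_Var: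
  "var_redex_args t \<Longrightarrow> var_redex_args (substL t k (Var j))"
  by (induction t arbitrary: k j) (auto simp: neutral_substL_Var split: if_splits)

lemma neutral_substM_Var: "neutral t \<Longrightarrow> neutral (substM t k (Var j))"
  by (induction t arbitrary: k j) auto

lemma var_redex_args_substM_Var:
  "var_redex_args t \<Longrightarrow> var_redex_args (substM t k (Var j))"
  by (induction t arbitrary: k j) (auto simp: neutral_substM_Var)

lemma neutral_red: "red s s' \<Longrightarrow> neutral s \<Longrightarrow> neutral s'"
  by (induction rule: red.induct) auto

lemma var_redex_args_red: "red s s' \<Longrightarrow> var_redex_args s \<Longrightarrow> var_redex_args s'"
proof (induction rule: red.induct)
  case (beta u v)
  then show ?case by (auto intro: var_redex_args_substL_Var)
next
  case (mu u v)
  then show ?case by (auto intro: var_redex_args_substM_Var)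
next
  case (appL t t' u)
  then show ?case using neutral_red by auto
next
  case (appR u u' t)
  then show ?case by (auto elim!: red_VarE)
qed auto

text \<open>\<open>G'\<close> is \<open>G\<close> with a fresh variable of index \<open>k\<close> inserted and typed like \<open>j\<close>.\<close>
lemma typing_substL_Var_inv:
  assumes "typing G (substL u k (Var j)) T D"
    and "\<forall>i. G' i = (if i < k then G i else if i = k then G j else G (i - 1))"
  shows "typing G' u T D"
  using assms
proof (induction u arbitrary: G G' k j T D)
  case (Var i)
  then have "T = G' i" by (auto elim!: typing_VarE split: if_splits)
  then show ?case by (metis typing.ax)
next
  case (Lam t)
  from Lam.prems(1) obtain A B where "T = Arr A B"
    and "typing (ext A G) (substL t (Suc k) (Var (Suc j))) B D"
    by (auto elim!: typing_LamE)
  moreover from this(2) have "typing (ext A G') t B D"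
    by (rule Lam.IH) (use Lam.prems(2) in \<open>auto simp: ext_def\<close>)
  ultimately show ?case by (simp add: typing.arr_i)
next
  case (App t1 t2)
  from App.prems(1) obtain A where "typing G (substL t1 k (Var j)) (Arr A T) D"
    and "typing G (substL t2 k (Var j)) A D"
    by (auto elim!: typing_AppE)
  then show ?case using App.IH App.prems(2) by (meson typing.arr_e)
next
  case (Mu t)
  then show ?case by (auto elim!: typing_MuE intro: typing.mu)
next
  case (MVar a t)
  then show ?case by (auto elim!: typing_MVarE intro: typing.bot)
qed

lemma typing_substM_Var_inv:
  assumes "typing G (substM u k (Var j)) T D"
    and "D' k = Arr (G j) (D k)" and "\<forall>i. i \<noteq> k \<longrightarrow> D' i = D i"
  shows "typing G u T D'"
  using assms
proof (induction u arbitrary: G D D' k j T)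
  case (Var i)
  then show ?case by (auto elim!: typing_VarE intro: typing.ax)
next
  case (Lam t)
  then show ?case by (fastforce elim!: typing_LamE intro: typing.arr_i simp: ext_def)
next
  case (App t1 t2)
  from App.prems(1) obtain A where "typing G (substM t1 k (Var j)) (Arr A T) D"
    and "typing G (substM t2 k (Var j)) A D"
    by (auto elim!: typing_AppE)
  then show ?case using App.IH App.prems(2,3) by (meson typing.arr_e)
next
  case (Mu t)
  from Mu.prems(1) have "typing G (substM t (Suc k) (Var j)) Bot (ext T D)"
    by (auto elim!: typing_MuE)
  then have "typing G t Bot (ext T D')"
    by (rule Mu.IH) (use Mu.prems(2,3) in \<open>auto simp: ext_def\<close>)
  then show ?case by (rule typing.mu)
next
  case (MVar a t)
  show ?case
  proof (cases "a = k")
    case True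
    with MVar.prems(1) obtain A' where "T = Bot"
      and "typing G (substM t k (Var j)) (Arr A' (D k)) D"
      and "typing G (Var j) A' D"
      by (auto elim!: typing_MVarE typing_AppE)
    moreover from this(3) have "A' = G j" by (auto elim: typing_VarE)
    ultimately show ?thesis
      using True MVar.IH MVar.prems(2,3) by (auto intro: typing.bot)
  next
    case False
    with MVar.prems(1) have "T = Bot" and "typing G (substM t k (Var j)) (D a) D"
      by (auto elim!: typing_MVarE)
    then show ?thesis
      using False MVar.IH MVar.prems(2,3) by (metis typing.bot)
  qed
qed

lemma typing_red_expand:
  "red s s' \<Longrightarrow> var_redex_args s \<Longrightarrow> typing G s' T D \<Longrightarrow> typing G s T D"
proof (induction arbitrary: G T D rule: red.induct)
  case (beta u v)
  then obtain k where v: "v = Var k" by auto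
  with beta have "typing (ext (G k) G) u T D"
    by (auto intro: typing_substL_Var_inv simp: ext_def)
  then show ?case using v by (metis typing.arr_i typing.arr_e typing.ax)
next
  case (mu u v)
  then obtain k where v: "v = Var k" by auto
  with mu have "typing G (substM u 0 (Var k)) Bot (ext T D)"
    by (auto elim!: typing_MuE)
  then have "typing G u Bot (ext (Arr (G k) T) D)"
    by (rule typing_substM_Var_inv) (auto simp: ext_def)
  then show ?case using v by (metis typing.mu typing.arr_e typing.ax)
qed (auto elim!: typing_AppE typing_LamE typing_MuE typing_MVarE
          intro: typing.arr_e typing.arr_i typing.mu typing.bot)

lemma typing_red_star_expand:
  "red_star s s' \<Longrightarrow> var_redex_args s \<Longrightarrow> typing G s' T D \<Longrightarrow> typing G s T D"
  by (induction rule: converse_rtranclp_induct)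
    (auto dest: var_redex_args_red typing_red_expand)

lemma typing_liftL_strengthen:
  assumes "typing G' (liftL k t) T D"
    and "\<forall>i<k. G' i = G i" and "\<forall>i\<ge>k. G' (Suc i) = G i"
  shows "typing G t T D"
  using assms
proof (induction t arbitrary: G G' k T D)
  case (Var i)
  then have "T = G i" by (auto elim!: typing_VarE split: if_splits)
  then show ?case by (metis typing.ax)
next
  case (Lam t)
  from Lam.prems(1) obtain A B where "T = Arr A B"
    and "typing (ext A G') (liftL (Suc k) t) B D"
    by (auto elim!: typing_LamE)
  moreover from this(2) have "typing (ext A G) t B D"
  proof (rule Lam.IH)
    show "\<forall>i<Suc k. ext A G' i = ext A G i"
      using Lam.prems(2) by (auto simp: ext_def less_Suc_eq_0_disj)
    show "\<forall>i\<ge>Suc k. ext A G' (Suc i) = ext A G i"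
    proof (intro allI impI)
      fix i assume "Suc k \<le> i"
      then show "ext A G' (Suc i) = ext A G i"
        using Lam.prems(3) by (cases i) (auto simp: ext_def)
    qed
  qed
  ultimately show ?case by (simp add: typing.arr_i)
next
  case (App t1 t2)
  from App.prems(1) obtain A where "typing G' (liftL k t1) (Arr A T) D"
    and "typing G' (liftL k t2) A D"
    by (auto elim!: typing_AppE)
  then show ?case using App.IH App.prems(2,3) by (meson typing.arr_e)
next
  case (Mu t)
  then show ?case by (auto elim!: typing_MuE intro: typing.mu)
next
  case (MVar a t)
  then show ?case by (auto elim!: typing_MVarE intro: typing.bot)
qed

theorem mainTheorem14:
  fixes t \<tau> :: trm and A B :: ty and \<Gamma> \<Delta> :: "nat \<Rightarrow> ty"
  assumes "normal t" and "normal \<tau>"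
    and "red_star (App (liftL 0 t) (Var 0)) \<tau>"
    and "typing (ext A \<Gamma>) \<tau> B \<Delta>"
  shows "typing \<Gamma> t (Arr A B) \<Delta>"
proof -
  have "var_redex_args (App (liftL 0 t) (Var 0))"
    using normal_var_redex_args[OF assms(1)] by (simp add: var_redex_args_liftL)
  then have "typing (ext A \<Gamma>) (App (liftL 0 t) (Var 0)) B \<Delta>"
    using assms(3,4) typing_red_star_expand by blast
  then obtain A' where "typing (ext A \<Gamma>) (liftL 0 t) (Arr A' B) \<Delta>"
    and "typing (ext A \<Gamma>) (Var 0) A' \<Delta>"
    by (auto elim!: typing_AppE)
  moreover from this(2) have "A' = A" by (auto elim: typing_VarE simp: ext_def)
  ultimately show ?thesis by (auto intro: typing_liftL_strengthen simp: ext_def)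
qed

end
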